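(* Assume the following setting. $E$ is a Boolean algebra of propositions (with conjunction $\&$, negation, disjunction), $E_0=E\setminus\{0\}$. $T$ is a commutative algebra with identity over $\mathbb{R}$ containing $\mathbb{R}$, whose elements are called unknown numbers; each $X\in T$ has an actual value $AV(X)\in\mathbb{R}$, where $AV:T\to T$ is a retraction of $T$ onto $\mathbb{R}$. For each $A\in E$, $T$ contains its indicator $I_A$ (the unknown whose actual value is $1$ if $A$ is true and $0$ if $A$ is false), and the indicators form a Boolean algebra of idempotents in $T$, with $I_{A\& B}=I_AI_B$. A plausible value function $PV:T\times E_0\to\mathbb{R}$ is given satisfying: (i) if $X\in T$, $s\in\mathbb{R}$, $A\in E_0$ and $A$ implies $AV(X)=s$, then $PV(X|A)=s$; (ii) if $X,Y\in T$, $A\in E_0$ and $A$ implies $AV(X)=AV(Y)$, then $PV(X|A)=PV(Y|A)$; (iii) if $X,Y\in T$, $C\in E_0$ and $C$ implies $AV(X)\le AV(Y)$, then $PV(X|C)\le PV(Y|C)$; (iv) if $r\in\mathbb{R}$, $C\in E_0$, $X,Y\in T$ and $PV(X|C)=PV(Y|C)$, then $PV(rX|C)=PV(rY|C)$; (v) if $A,C\in E$ (with $A\& C\in E_0$), $X_1,X_2\in T$ and $PV(X_1|A\& C)=PV(X_2|A\& C)$, then $PV(X_1I_A|C)=PV(X_2I_A|C)$. Define the plausibility $PL(A|C)=PV(I_A|C)$ for $A\in E$, $C\in E_0$. Then for all $A,B,C\in E$ with $B\& C\in E_0$, $$PL(A\& B|C)=PL(A|B\& C)\,PL(B|C).$$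
   Context: Propositions are statements that are either true or false; "$A$ implies (a statement about actual values)" means that the statement holds whenever $A$ is true. Every real number $r\in T$ satisfies $AV(r)=r$, and any $A$ trivially implies $AV(r)=r$. *)

theory Defs
  imports Main "HOL.Real_Vector_Spaces"
begin

text \<open>Semantics of propositions: a proposition A (element of a Boolean algebra 'e)
  is true or false in each possible state of affairs w; in each state every unknown
  number X has an actual value av w X.  "A implies P(AV)" means P holds in every
  state in which A is true.\<close>

definition implies :: "('w \<Rightarrow> 'e \<Rightarrow> bool) \<Rightarrow> 'e \<Rightarrow> ('w \<Rightarrow> bool) \<Rightarrow> bool" where
  "implies holds A P \<longleftrightarrow> (\<forall>w. holds w A \<longrightarrow> P w)"

definition PL :: "('t \<Rightarrow> 'e \<Rightarrow> real) \<Rightarrow> ('e \<Rightarrow> 't) \<Rightarrow> 'e \<Rightarrow> 'e \<Rightarrow> real" where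
  "PL PV I A C = PV (I A) C"

end

theory Submission
  imports Defs
begin

text \<open>Let \<open>p = PV(X|B&C)\<close> and \<open>q = PV(I_B|C)\<close>. By axiom (v) the unknown \<open>X\<close> may be
  replaced by the constant \<open>p\<close> inside \<open>X I_B\<close>, and by axiom (iv) \<open>I_B\<close> may then be replaced by
  the constant \<open>q\<close> inside \<open>p I_B\<close>; axiom (i) evaluates the constant \<open>pq\<close>. Taking \<open>X = I_A\<close> and
  using \<open>I_{A&B} = I_A I_B\<close> gives the product rule.\<close>

locale plausible_value =
  fixes holds :: "'w \<Rightarrow> 'e::bounded_lattice_bot \<Rightarrow> bool"
    and av :: "'w \<Rightarrow> 't::real_algebra_1 \<Rightarrow> real"
    and I :: "'e \<Rightarrow> 't"
    and PV :: "'t \<Rightarrow> 'e \<Rightarrow> real"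
  assumes av_of_real: "\<And>w r. av w (of_real r) = r"
    and PV_eq_if_implies: "\<And>X s A. A \<noteq> bot \<Longrightarrow> implies holds A (\<lambda>w. av w X = s) \<Longrightarrow> PV X A = s"
    and PV_scaleR_cong: "\<And>r C X Y. C \<noteq> bot \<Longrightarrow> PV X C = PV Y C \<Longrightarrow> PV (r *\<^sub>R X) C = PV (r *\<^sub>R Y) C"
    and PV_mult_indicator_cong: "\<And>A C X Y. inf A C \<noteq> bot \<Longrightarrow> PV X (inf A C) = PV Y (inf A C) \<Longrightarrow>
          PV (X * I A) C = PV (Y * I A) C"
begin

lemma PV_of_real:
  assumes "C \<noteq> bot"
  shows "PV (of_real r) C = r"
  using PV_eq_if_implies[OF assms] av_of_real unfolding implies_def by blast

lemma PV_mult_indicator: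
  assumes BC: "inf B C \<noteq> bot"
  shows "PV (X * I B) C = PV X (inf B C) * PV (I B) C"
proof -
  define p where "p = PV X (inf B C)"
  define q where "q = PV (I B) C"
  have C: "C \<noteq> bot"
    using BC by (metis inf_bot_right)
  have "PV X (inf B C) = PV (of_real p) (inf B C)"
    using PV_of_real[OF BC] by (simp add: p_def)
  then have "PV (X * I B) C = PV (p *\<^sub>R I B) C"
    using PV_mult_indicator_cong[OF BC] by (simp add: of_real_def)
  moreover have "PV (I B) C = PV (of_real q) C"
    using PV_of_real[OF C] by (simp add: q_def)
  then have "PV (p *\<^sub>R I B) C = PV (p *\<^sub>R of_real q) C"
    by (rule PV_scaleR_cong[OF C])
  moreover have "PV (p *\<^sub>R of_real q) C = p * q"
    using PV_of_real[OF C] by (simp add: scaleR_conv_of_real flip: of_real_mult)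
  ultimately show ?thesis
    by (simp add: p_def q_def)
qed

end

theorem mainTheorem3:
  fixes holds :: "'w \<Rightarrow> 'e::boolean_algebra \<Rightarrow> bool"
    and av :: "'w \<Rightarrow> 't::{comm_ring_1, real_algebra_1} \<Rightarrow> real"
    and I :: "'e \<Rightarrow> 't"
    and PV :: "'t \<Rightarrow> 'e \<Rightarrow> real"
  assumes holds_inf: "\<And>w A B. holds w (inf A B) \<longleftrightarrow> holds w A \<and> holds w B"
    and holds_sup: "\<And>w A B. holds w (sup A B) \<longleftrightarrow> holds w A \<or> holds w B"
    and holds_neg: "\<And>w A. holds w (- A) \<longleftrightarrow> \<not> holds w A"
    and holds_bot: "\<And>w. \<not> holds w bot"
    and holds_top: "\<And>w. holds w top"
    and av_real: "\<And>w r. av w (of_real r) = r"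
    and av_ind: "\<And>w A. av w (I A) = (if holds w A then 1 else 0)"
    and I_inf: "\<And>A B. I (inf A B) = I A * I B"
    and I_top: "I top = 1"
    and I_neg: "\<And>A. I (- A) = 1 - I A"
    and PV_i: "\<And>X s A. A \<noteq> bot \<Longrightarrow> implies holds A (\<lambda>w. av w X = s) \<Longrightarrow> PV X A = s"
    and PV_ii: "\<And>X Y A. A \<noteq> bot \<Longrightarrow> implies holds A (\<lambda>w. av w X = av w Y) \<Longrightarrow> PV X A = PV Y A"
    and PV_iii: "\<And>X Y C. C \<noteq> bot \<Longrightarrow> implies holds C (\<lambda>w. av w X \<le> av w Y) \<Longrightarrow> PV X C \<le> PV Y C"
    and PV_iv: "\<And>r C X Y. C \<noteq> bot \<Longrightarrow> PV X C = PV Y C \<Longrightarrow> PV (r *\<^sub>R X) C = PV (r *\<^sub>R Y) C"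
    and PV_v: "\<And>A C X1 X2. inf A C \<noteq> bot \<Longrightarrow> PV X1 (inf A C) = PV X2 (inf A C) \<Longrightarrow>
                 PV (X1 * I A) C = PV (X2 * I A) C"
    and BC: "inf B C \<noteq> bot"
  shows "PL PV I (inf A B) C = PL PV I A (inf B C) * PL PV I B C"
proof -
  interpret plausible_value holds av I PV
    using av_real PV_i PV_iv PV_v by unfold_locales
  show ?thesis
    unfolding PL_def I_inf using PV_mult_indicator[OF BC] .
qed

end
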